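(* Let $\mathcal H$ be a real Hilbert space and $p\ge 2$. Let $J:\mathcal H\to\mathbb R\cup\{\infty\}$ be convex, lower semicontinuous, proper, with dense effective domain, and absolutely $p$-homogeneous ($J(cu)=|c|^pJ(u)$ for all $c\neq0$, $u\in\mathcal H$, and $J(0)=0$), and assume $\lambda_1:=\inf_{u\in\mathcal H_0}\frac{pJ(u)}{\|u\|^p}>0$. Let $f\in\mathcal H_0$ and let $u$ be the solution of the gradient flow $\partial_t u+\partial J(u)\ni 0$, $u(0)=f$. Then the extinction time satisfies $T_{\mathrm{ex}}=\infty$.
   Context: $\langle\cdot,\cdot\rangle$ and $\|\cdot\|$ denote the inner product and norm of $\mathcal H$. The subdifferential is $\partial J(u)=\{\zeta\in\mathcal H: J(u)+\langle\zeta,v-u\rangle\le J(v)\ \forall v\in\mathcal H\}$. $\mathcal N(J)=\{u\in\mathcal H:J(u)=0\}$ is the null-space of $J$ (a closed linear subspace) and $\mathcal H_0:=\mathcal N(J)^\perp\setminus\{0\}$. The gradient flow is understood in Brezis' sense: the unique continuous $u:[0,\infty)\to\mathcal H$, Lipschitz on $[\delta,\infty)$ for every $\delta>0$, right-differentiable on $(0,\infty)$ with $u(0)=f$ and right derivative $\partial_t^+u(t)=-\zeta(t)$, where $\zeta(t)$ is the element of minimal norm of the closed convex set $\partial J(u(t))$. The extinction time is $T_{\mathrm{ex}}:=\inf\{T>0: u(t)=0\ \forall t\ge T\}\in(0,\infty]$. *)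

theory Defs
  imports "HOL-Analysis.Analysis" "HOL-Library.Extended_Real"
begin

text \<open>Functionals J : H -> R \<union> {\<infinity>} are modelled as maps into ereal that never take the value -\<infinity>.\<close>

definition convex_ereal :: "('a::real_vector \<Rightarrow> ereal) \<Rightarrow> bool" where
  "convex_ereal J \<longleftrightarrow>
     (\<forall>x y. \<forall>t::real. 0 \<le> t \<and> t \<le> 1 \<longrightarrow>
        J ((1 - t) *\<^sub>R x + t *\<^sub>R y) \<le> ereal (1 - t) * J x + ereal t * J y)"

definition lsc_ereal :: "('a::topological_space \<Rightarrow> ereal) \<Rightarrow> bool" where
  "lsc_ereal J \<longleftrightarrow> (\<forall>c::real. closed {u. J u \<le> ereal c})"

definition proper_ereal :: "('a \<Rightarrow> ereal) \<Rightarrow> bool" where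
  "proper_ereal J \<longleftrightarrow> (\<forall>u. J u \<noteq> -\<infinity>) \<and> (\<exists>u. J u \<noteq> \<infinity>)"

definition eff_dom :: "('a \<Rightarrow> ereal) \<Rightarrow> 'a set" where
  "eff_dom J = {u. J u < \<infinity>}"

definition abs_p_homogeneous :: "real \<Rightarrow> ('a::real_vector \<Rightarrow> ereal) \<Rightarrow> bool" where
  "abs_p_homogeneous p J \<longleftrightarrow>
     (\<forall>c u. c \<noteq> 0 \<longrightarrow> J (c *\<^sub>R u) = ereal (\<bar>c\<bar> powr p) * J u) \<and> J 0 = 0"

definition null_space :: "('a \<Rightarrow> ereal) \<Rightarrow> 'a set" where
  "null_space J = {u. J u = 0}"

definition H0 :: "('a::real_inner \<Rightarrow> ereal) \<Rightarrow> 'a set" where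
  "H0 J = orthogonal_comp (null_space J) - {0}"

definition lambda1 :: "real \<Rightarrow> ('a::real_inner \<Rightarrow> ereal) \<Rightarrow> ereal" where
  "lambda1 p J = (INF u\<in>H0 J. ereal p * J u / ereal (norm u powr p))"

definition subdiff :: "('a::real_inner \<Rightarrow> ereal) \<Rightarrow> 'a \<Rightarrow> 'a set" where
  "subdiff J u = {\<zeta>. \<forall>v. J u + ereal (inner \<zeta> (v - u)) \<le> J v}"

definition min_norm_elem :: "'a::real_normed_vector set \<Rightarrow> 'a \<Rightarrow> bool" where
  "min_norm_elem S z \<longleftrightarrow> z \<in> S \<and> (\<forall>w\<in>S. norm z \<le> norm w)"

text \<open>Solution of the gradient flow in Brezis' sense.\<close>
definition is_gradient_flow :: "('a::real_inner \<Rightarrow> ereal) \<Rightarrow> 'a \<Rightarrow> (real \<Rightarrow> 'a) \<Rightarrow> bool" where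
  "is_gradient_flow J f u \<longleftrightarrow>
     continuous_on {0..} u \<and>
     (\<forall>\<delta>>0. \<exists>L. L-lipschitz_on {\<delta>..} u) \<and>
     u 0 = f \<and>
     (\<forall>t>0. \<exists>\<zeta>. min_norm_elem (subdiff J (u t)) \<zeta> \<and>
                 (u has_vector_derivative (- \<zeta>)) (at t within {t..}))"

definition extinction_time :: "(real \<Rightarrow> 'a::zero) \<Rightarrow> ereal" where
  "extinction_time u = Inf {ereal T | T. T > 0 \<and> (\<forall>t\<ge>T. u t = 0)}"

end

theory Submission
  imports Defs
begin

text \<open>
  Write \<open>E(t) = J(u(t))\<close> and \<open>y(t) = |u(t)|^2\<close>. Euler's identity
  \<open>\<langle>\<zeta>, u\<rangle> = p J(u)\<close> for \<open>\<zeta> \<in> \<partial>J(u)\<close> gives \<open>y' = -2pE\<close>, while the energy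
  decreases at rate at least \<open>|\<zeta>|^2\<close>. Since \<open>(pE)^2 \<le> |\<zeta>|^2 y\<close> by Cauchy-Schwarz,
  the Rayleigh quotient \<open>E / y^(p/2)\<close> is nonincreasing as long as \<open>u \<noteq> 0\<close>. Before a
  first zero \<open>T\<close> of \<open>u\<close> this gives \<open>E \<le> C y^(p/2) \<le> K y / (2p)\<close> (using \<open>p \<ge> 2\<close>),
  so \<open>y' \<ge> -K y\<close> and by Gronwall \<open>y(T) > 0\<close>, a contradiction.

  Only right derivatives of \<open>u\<close> are available, so monotonicity is derived from upper right
  Dini derivatives and left lower semicontinuity. The rate \<open>|\<zeta>(t)|^2\<close> for the energy rests on
  \<open>liminf \<langle>\<zeta>(s), \<zeta>(t)\<rangle> \<ge> |\<zeta>(t)|^2\<close> as \<open>s\<close> decreases to \<open>t\<close>: weak cluster points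
  of \<open>\<zeta>(s)\<close> lie in \<open>\<partial>J(u(t))\<close>, where \<open>\<zeta>(t)\<close> has minimal norm.
\<close>

section \<open>Dini derivatives\<close>

definition upper_right_dini_le :: "(real \<Rightarrow> real) \<Rightarrow> real \<Rightarrow> real \<Rightarrow> bool" where
  "upper_right_dini_le \<phi> t a \<longleftrightarrow>
     (\<forall>\<eta>>0. eventually (\<lambda>s. \<phi> s \<le> \<phi> t + (a + \<eta>) * (s - t)) (at_right t))"

lemma upper_right_dini_le_mono:
  assumes "upper_right_dini_le \<phi> t a" "a \<le> b"
  shows "upper_right_dini_le \<phi> t b"
  unfolding upper_right_dini_le_def
proof (intro allI impI)
  fix \<eta> :: real assume "\<eta> > 0"
  with assms(1) have "eventually (\<lambda>s. \<phi> s \<le> \<phi> t + (a + \<eta>) * (s - t)) (at_right t)"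
    unfolding upper_right_dini_le_def by blast
  then show "eventually (\<lambda>s. \<phi> s \<le> \<phi> t + (b + \<eta>) * (s - t)) (at_right t)"
    using eventually_at_right_less[of t]
  proof eventually_elim
    case (elim s)
    have "(a + \<eta>) * (s - t) \<le> (b + \<eta>) * (s - t)"
      using \<open>a \<le> b\<close> elim(2) by (intro mult_right_mono) auto
    with elim(1) show ?case by linarith
  qed
qed

lemma has_vector_derivative_right_approx:
  assumes "(u has_vector_derivative v) (at t within {t..})" "\<eta> > 0"
  shows "eventually (\<lambda>s. norm (u s - u t - (s - t) *\<^sub>R v) \<le> \<eta> * (s - t)) (at_right t)"
proof -
  have "(u has_derivative (\<lambda>h. h *\<^sub>R v)) (at t within {t..})"
    using assms(1) by (simp add: has_vector_derivative_def)
  then obtain d where "d > 0" and d: "\<forall>s\<in>{t..}. norm (s - t) < d \<longrightarrow>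
      norm (u s - u t - (s - t) *\<^sub>R v) \<le> \<eta> * norm (s - t)"
    using assms(2) unfolding has_derivative_within_alt by blast
  show ?thesis
    unfolding eventually_at_right_field using \<open>d > 0\<close> d by (intro exI[of _ "t + d"]) auto
qed

lemma upper_right_dini_le_derivative:
  assumes "(\<phi> has_real_derivative D) (at t within {t..})"
  shows "upper_right_dini_le \<phi> t D"
  unfolding upper_right_dini_le_def
proof (intro allI impI)
  fix \<eta> :: real assume "\<eta> > 0"
  with assms have "eventually (\<lambda>s. \<bar>\<phi> s - \<phi> t - (s - t) * D\<bar> \<le> \<eta> * (s - t)) (at_right t)"
    using has_vector_derivative_right_approx
    by (fastforce simp: has_real_derivative_iff_has_vector_derivative)
  then show "eventually (\<lambda>s. \<phi> s \<le> \<phi> t + (D + \<eta>) * (s - t)) (at_right t)"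
    by eventually_elim (simp add: abs_le_iff algebra_simps)
qed

lemma norm_right_derivative_le_lipschitz:
  assumes "(u has_vector_derivative v) (at t within {t..})" "L-lipschitz_on {t..} u"
  shows "norm v \<le> L"
proof (rule field_le_epsilon)
  fix e :: real assume "e > 0"
  have "eventually (\<lambda>s. norm (u s - u t - (s - t) *\<^sub>R v) \<le> e * (s - t) \<and> t < s) (at_right t)"
    using has_vector_derivative_right_approx[OF assms(1) \<open>e > 0\<close>] eventually_at_right_less
    by (rule eventually_conj)
  then obtain s where s: "norm (u s - u t - (s - t) *\<^sub>R v) \<le> e * (s - t)" "t < s"
    using eventually_happens'[OF trivial_limit_at_right_real] by blast
  have "norm (u s - u t) \<le> L * (s - t)"
    using lipschitz_onD[OF assms(2), of s t] s(2) by (simp add: dist_norm dist_real_def)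
  moreover have "(s - t) * norm v \<le> norm (u s - u t) + norm (u s - u t - (s - t) *\<^sub>R v)"
    using norm_triangle_ineq4[of "u s - u t" "u s - u t - (s - t) *\<^sub>R v"] s(2) by simp
  ultimately have "(s - t) * norm v \<le> (s - t) * (L + e)"
    using s(1) by (simp add: algebra_simps)
  with s(2) show "norm v \<le> L + e" by simp
qed

lemma not_eventually_at_rightE:
  fixes t :: real
  assumes "\<not> eventually P (at_right t)"
  obtains s where "\<And>m. t < s m" "s \<longlonglongrightarrow> t" "\<And>m. \<not> P (s m)"
proof -
  have "\<exists>s. t < s \<and> s < t + inverse (Suc m) \<and> \<not> P s" for m
    using assms unfolding eventually_at_right_field
    by (metis add.right_neutral add_strict_left_mono inverse_positive_iff_positive not_le
        of_nat_0_less_iff zero_less_Suc)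
  then obtain s where s_gt: "\<And>m. t < s m" and s_lt: "\<And>m. s m < t + inverse (Suc m)"
    and s_not: "\<And>m. \<not> P (s m)"
    by metis
  have "s \<longlonglongrightarrow> t"
  proof (rule tendsto_sandwich[of "\<lambda>_. t" _ _ "\<lambda>m. t + inverse (Suc m)"])
    show "(\<lambda>m. t + inverse (Suc m)) \<longlonglongrightarrow> t"
      using tendsto_add[OF tendsto_const LIMSEQ_inverse_real_of_nat, of t] by simp
  qed (use s_gt s_lt in \<open>auto intro!: always_eventually less_imp_le\<close>)
  from s_gt this s_not show ?thesis by (rule that)
qed

lemma isCont_left_lsc:
  fixes \<phi> :: "real \<Rightarrow> real"
  assumes "isCont \<phi> t" "\<epsilon> > 0"
  shows "eventually (\<lambda>s. \<phi> t - \<epsilon> < \<phi> s) (at_left t)"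
proof -
  have "eventually (\<lambda>s. dist (\<phi> s) (\<phi> t) < \<epsilon>) (at t)"
    using assms unfolding isCont_def by (rule tendstoD)
  then have "eventually (\<lambda>s. dist (\<phi> s) (\<phi> t) < \<epsilon>) (at_left t)"
    by (rule filter_leD[OF at_le, rotated]) simp
  then show ?thesis by eventually_elim (simp add: dist_real_def)
qed

lemma real_induct_interval_Sup:
  fixes a b :: real and P :: "real \<Rightarrow> bool"
  defines "G \<equiv> {r \<in> {a..b}. \<forall>q\<in>{a..r}. P q}"
  assumes "a \<le> b" "P a"
    and left: "\<And>c. a < c \<Longrightarrow> c \<le> b \<Longrightarrow> (\<And>q. a \<le> q \<Longrightarrow> q < c \<Longrightarrow> P q) \<Longrightarrow> P c"
  shows "Sup G \<in> G"
proof -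
  define c where "c = Sup G"
  have "a \<in> G" using assms(2,3) by (simp add: G_def)
  have ac: "a \<le> c" unfolding c_def using \<open>a \<in> G\<close> by (intro cSup_upper bdd_aboveI[of _ b]) (auto simp: G_def)
  have cb: "c \<le> b" unfolding c_def using \<open>a \<in> G\<close> by (intro cSup_least) (auto simp: G_def)
  have below_c: "P q" if "a \<le> q" "q < c" for q
  proof -
    obtain r where "r \<in> G" "q < r"
      using \<open>q < c\<close> \<open>a \<in> G\<close> unfolding c_def by (metis empty_iff less_cSupE)
    with that show ?thesis by (simp add: G_def)
  qed
  have "P c"
  proof (cases "a = c")
    case False
    with ac have "a < c" by simp
    from left[OF this cb below_c] show ?thesis .
  qed (use \<open>P a\<close> in simp)
  have "c \<in> G"
    unfolding G_def
  proof (intro CollectI conjI ballI)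
    fix q assume "q \<in> {a..c}"
    then show "P q" using \<open>P c\<close> below_c[of q] by (cases "q = c") auto
  qed (use ac cb in auto)
  then show ?thesis by (simp add: c_def)
qed

lemma real_induct_interval:
  fixes a b :: real
  assumes "a \<le> b" "P a"
    and left: "\<And>c. a < c \<Longrightarrow> c \<le> b \<Longrightarrow> (\<And>q. a \<le> q \<Longrightarrow> q < c \<Longrightarrow> P q) \<Longrightarrow> P c"
    and right: "\<And>c. a \<le> c \<Longrightarrow> c < b \<Longrightarrow> (\<And>q. a \<le> q \<Longrightarrow> q \<le> c \<Longrightarrow> P q) \<Longrightarrow> eventually P (at_right c)"
  shows "P b"
proof -
  define G where "G = {r \<in> {a..b}. \<forall>q\<in>{a..r}. P q}"
  define c where "c = Sup G"
  have "c \<in> G" unfolding c_def G_def using assms(1,2) left by (rule real_induct_interval_Sup)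
  have "c = b"
  proof (rule ccontr)
    assume "c \<noteq> b"
    with \<open>c \<in> G\<close> have "a \<le> c" "c < b" by (auto simp: G_def)
    with \<open>c \<in> G\<close> have "eventually P (at_right c)"
      by (intro right) (auto simp: G_def)
    moreover have "eventually (\<lambda>s. c < s \<and> s < b) (at_right c)"
      using \<open>c < b\<close> by (intro eventually_at_rightI[of _ b]) auto
    ultimately have "eventually (\<lambda>s. P s \<and> c < s \<and> s < b) (at_right c)"
      by (rule eventually_conj)
    then obtain d where "d > c" and d: "\<And>s. c < s \<Longrightarrow> s < d \<Longrightarrow> P s \<and> s < b"
      unfolding eventually_at_right_field by blast
    define r where "r = (c + d) / 2"
    have "c < r" "r < d" using \<open>d > c\<close> by (simp_all add: r_def)
    have "r \<in> G"
      unfolding G_def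
    proof (intro CollectI conjI ballI)
      fix q assume q: "q \<in> {a..r}"
      show "P q"
      proof (cases "q \<le> c")
        case True
        then show ?thesis using \<open>c \<in> G\<close> q by (simp add: G_def)
      qed (use d[of q] q \<open>r < d\<close> in simp)
    qed (use \<open>a \<le> c\<close> \<open>c < r\<close> d[of r] \<open>r < d\<close> in auto)
    then have "r \<le> c" unfolding c_def by (intro cSup_upper bdd_aboveI[of _ b]) (auto simp: G_def)
    with \<open>c < r\<close> show False by simp
  qed
  with \<open>c \<in> G\<close> show ?thesis by (simp add: G_def)
qed

lemma nonincreasing_by_upper_right_dini:
  fixes \<phi> :: "real \<Rightarrow> real"
  assumes "a \<le> b"
    and lsc: "\<And>t \<epsilon>. t \<in> {a<..b} \<Longrightarrow> \<epsilon> > 0 \<Longrightarrow> eventually (\<lambda>s. \<phi> t - \<epsilon> < \<phi> s) (at_left t)"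
    and dini: "\<And>t. t \<in> {a..<b} \<Longrightarrow> upper_right_dini_le \<phi> t 0"
  shows "\<phi> b \<le> \<phi> a"
proof (rule field_le_epsilon)
  fix \<epsilon> :: real assume "\<epsilon> > 0"
  define \<eta> where "\<eta> = \<epsilon> / (b - a + 1)"
  have "\<eta> > 0" using assms(1) \<open>\<epsilon> > 0\<close> by (simp add: \<eta>_def)
  have "\<phi> b \<le> \<phi> a + \<eta> * (b - a)"
  proof (rule real_induct_interval[of a b "\<lambda>q. \<phi> q \<le> \<phi> a + \<eta> * (q - a)"])
    fix c assume c: "a < c" "c \<le> b" and below: "\<And>q. a \<le> q \<Longrightarrow> q < c \<Longrightarrow> \<phi> q \<le> \<phi> a + \<eta> * (q - a)"
    show "\<phi> c \<le> \<phi> a + \<eta> * (c - a)"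
    proof (rule field_le_epsilon)
      fix e :: real assume "e > 0"
      have "eventually (\<lambda>s. \<phi> c - e < \<phi> s) (at_left c)"
        using lsc c \<open>e > 0\<close> by simp
      moreover have "eventually (\<lambda>s. a < s \<and> s < c) (at_left c)"
        using c by (intro eventually_at_leftI[of a]) auto
      ultimately have "eventually (\<lambda>s. \<phi> c - e < \<phi> s \<and> a < s \<and> s < c) (at_left c)"
        by (rule eventually_conj)
      then obtain s where "\<phi> c - e < \<phi> s" "a < s" "s < c"
        using eventually_happens'[OF trivial_limit_at_left_real] by blast
      moreover have "\<eta> * (s - a) \<le> \<eta> * (c - a)" using \<open>\<eta> > 0\<close> \<open>s < c\<close> by simp
      ultimately show "\<phi> c \<le> \<phi> a + \<eta> * (c - a) + e" using below[of s] by linarith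
    qed
  next
    fix c assume c: "a \<le> c" "c < b" and upto: "\<And>q. a \<le> q \<Longrightarrow> q \<le> c \<Longrightarrow> \<phi> q \<le> \<phi> a + \<eta> * (q - a)"
    have "eventually (\<lambda>s. \<phi> s \<le> \<phi> c + (0 + \<eta>) * (s - c)) (at_right c)"
      using dini[of c] c \<open>\<eta> > 0\<close> unfolding upper_right_dini_le_def by simp
    then show "eventually (\<lambda>s. \<phi> s \<le> \<phi> a + \<eta> * (s - a)) (at_right c)"
      by eventually_elim (use upto[of c] c in \<open>simp add: algebra_simps\<close>)
  qed (use assms(1) in simp_all)
  also have "\<eta> * (b - a) \<le> \<epsilon>"
    using assms(1) \<open>\<epsilon> > 0\<close> by (simp add: \<eta>_def field_simps)
  finally show "\<phi> b \<le> \<phi> a + \<epsilon>" by simp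
qed

lemma quotient_increment_le:
  fixes fs ft gs gt a D h e1 e2 :: real
  assumes "h > 0" "gt > 0" "gt / 2 < gs" "ft \<ge> 0" "e1 \<ge> 0" "e2 \<ge> 0"
    and "fs \<le> ft + (a + e1) * h" "gt + h * D - e2 * h \<le> gs" and sign: "a * gt \<le> ft * D"
  shows "fs / gs - ft / gt \<le> h * (2 * (e1 * gt + ft * e2) / gt\<^sup>2)"
proof -
  define B where "B = e1 * gt + ft * e2"
  have "B \<ge> 0" "gs > 0" using assms by (simp_all add: B_def)
  have "ft * (gt + h * D - e2 * h) \<le> ft * gs"
    using assms(8,4) by (rule mult_left_mono)
  moreover have "fs * gt \<le> (ft + (a + e1) * h) * gt"
    using assms(2,7) by simp
  ultimately have "fs * gt - ft * gs \<le> (ft + (a + e1) * h) * gt - ft * (gt + h * D - e2 * h)"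
    by linarith
  also have "\<dots> = h * (a * gt - ft * D) + h * B"
    by (simp add: B_def algebra_simps)
  also have "\<dots> \<le> h * B"
    using sign \<open>h > 0\<close> by (simp add: mult_nonneg_nonpos)
  finally have num: "fs * gt - ft * gs \<le> h * B" .
  have "fs / gs - ft / gt = (fs * gt - ft * gs) / (gs * gt)"
    using \<open>gs > 0\<close> \<open>gt > 0\<close> by (simp add: field_simps)
  also have "\<dots> \<le> h * B / (gs * gt)"
    using num \<open>gs > 0\<close> \<open>gt > 0\<close> by (intro divide_right_mono) auto
  also have "\<dots> \<le> h * B / ((gt / 2) * gt)"
    using \<open>h > 0\<close> \<open>B \<ge> 0\<close> \<open>gt > 0\<close> assms(3)
    by (intro divide_left_mono mult_right_mono mult_pos_pos) auto
  also have "\<dots> = h * (2 * B / gt\<^sup>2)"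
    by (simp add: power2_eq_square)
  finally show ?thesis by (simp add: B_def)
qed

lemma upper_right_dini_quotient_nonpos:
  fixes f g :: "real \<Rightarrow> real"
  assumes f: "upper_right_dini_le f t a" and g: "(g has_real_derivative D) (at t within {t..})"
    and "g t > 0" "f t \<ge> 0" and sign: "a * g t \<le> f t * D"
  shows "upper_right_dini_le (\<lambda>s. f s / g s) t 0"
  unfolding upper_right_dini_le_def
proof (intro allI impI)
  fix \<eta> :: real assume "\<eta> > 0"
  define e1 where "e1 = \<eta> * g t / 4"
  define e2 where "e2 = \<eta> * (g t)\<^sup>2 / (4 * (f t + 1))"
  have "e1 > 0" "e2 > 0" using \<open>\<eta> > 0\<close> \<open>g t > 0\<close> \<open>f t \<ge> 0\<close> by (simp_all add: e1_def e2_def)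
  have "f t * e2 = \<eta> * (g t)\<^sup>2 / 4 * (f t / (f t + 1))" by (simp add: e2_def)
  also have "\<dots> \<le> \<eta> * (g t)\<^sup>2 / 4" using \<open>\<eta> > 0\<close> \<open>f t \<ge> 0\<close> by (intro mult_left_le) auto
  finally have "2 * (e1 * g t + f t * e2) / (g t)\<^sup>2 \<le> \<eta>"
    using \<open>g t > 0\<close> by (simp add: e1_def power2_eq_square field_simps)
  have "(g \<longlongrightarrow> g t) (at_right t)"
    using DERIV_continuous[OF g] by (simp add: continuous_within at_within_Ici_at_right)
  then have "eventually (\<lambda>s. g t / 2 < g s) (at_right t)"
    using \<open>g t > 0\<close> by (intro order_tendstoD(1)) auto
  moreover have "eventually (\<lambda>s. \<bar>g s - g t - (s - t) * D\<bar> \<le> e2 * (s - t)) (at_right t)"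
    using has_vector_derivative_right_approx[of g D t e2] g \<open>e2 > 0\<close>
    by (simp add: has_real_derivative_iff_has_vector_derivative)
  moreover have "eventually (\<lambda>s. f s \<le> f t + (a + e1) * (s - t)) (at_right t)"
    using f \<open>e1 > 0\<close> unfolding upper_right_dini_le_def by blast
  ultimately show "eventually (\<lambda>s. f s / g s \<le> f t / g t + (0 + \<eta>) * (s - t)) (at_right t)"
    using eventually_at_right_less[of t]
  proof eventually_elim
    case (elim s)
    have "s - t > 0" "0 \<le> e1" "0 \<le> e2" using elim(4) \<open>e1 > 0\<close> \<open>e2 > 0\<close> by simp_all
    moreover have "g t + (s - t) * D - e2 * (s - t) \<le> g s"
      using abs_le_D2[OF elim(2)] by linarith
    ultimately have "f s / g s - f t / g t \<le> (s - t) * (2 * (e1 * g t + f t * e2) / (g t)\<^sup>2)"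
      using quotient_increment_le \<open>g t > 0\<close> elim(1) \<open>f t \<ge> 0\<close> elim(3) sign by blast
    also have "\<dots> \<le> (s - t) * \<eta>"
      using \<open>2 * (e1 * g t + f t * e2) / (g t)\<^sup>2 \<le> \<eta>\<close> elim(4) by (intro mult_left_mono) auto
    finally show ?case by (simp add: algebra_simps)
  qed
qed

lemma eventually_quotient_gt:
  fixes f g :: "real \<Rightarrow> real"
  assumes f: "\<And>\<epsilon>. \<epsilon> > 0 \<Longrightarrow> eventually (\<lambda>s. f t - \<epsilon> < f s) F"
    and g: "(g \<longlongrightarrow> g t) F" "g t > 0" and "\<epsilon> > 0"
  shows "eventually (\<lambda>s. f t / g t - \<epsilon> < f s / g s) F"
proof -
  define \<epsilon>1 where "\<epsilon>1 = \<epsilon> * g t / 2"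
  have "((\<lambda>s. (f t - \<epsilon>1) / g s) \<longlongrightarrow> (f t - \<epsilon>1) / g t) F"
    using g by (intro tendsto_intros) auto
  moreover have "f t / g t - \<epsilon> < (f t - \<epsilon>1) / g t"
    using \<open>\<epsilon> > 0\<close> \<open>g t > 0\<close> by (simp add: \<epsilon>1_def field_simps)
  ultimately have "eventually (\<lambda>s. f t / g t - \<epsilon> < (f t - \<epsilon>1) / g s) F"
    by (rule order_tendstoD(1))
  moreover have "eventually (\<lambda>s. f t - \<epsilon>1 < f s) F"
    using f \<open>\<epsilon> > 0\<close> \<open>g t > 0\<close> by (simp add: \<epsilon>1_def)
  moreover have "eventually (\<lambda>s. 0 < g s) F"
    using g by (rule order_tendstoD(1))
  ultimately show ?thesis
    by eventually_elim (meson divide_strict_right_mono less_trans)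
qed

section \<open>Closed convex sets in Hilbert spaces\<close>

lemma parallelogram_law:
  fixes x y :: "'a::real_inner"
  shows "(norm (x - y))\<^sup>2 + (norm (x + y))\<^sup>2 = 2 * (norm x)\<^sup>2 + 2 * (norm y)\<^sup>2"
  by (simp add: power2_norm_eq_inner inner_diff_left inner_diff_right inner_add_left
      inner_add_right inner_commute)

lemma convex_sq_norm_diff_le:
  fixes S :: "'a::real_inner set"
  assumes "convex S" "x \<in> S" "y \<in> S" and q: "\<And>w. w \<in> S \<Longrightarrow> q \<le> (norm w)\<^sup>2"
  shows "(norm (x - y))\<^sup>2 \<le> 2 * ((norm x)\<^sup>2 - q) + 2 * ((norm y)\<^sup>2 - q)"
proof -
  have "(1/2) *\<^sub>R x + (1/2) *\<^sub>R y \<in> S"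
    using assms(1-3) by (intro convexD) auto
  from q[OF this] have "4 * q \<le> (norm (x + y))\<^sup>2"
    by (simp add: scaleR_add_right[symmetric] power_divide)
  with parallelogram_law[of x y] show ?thesis by argo
qed

lemma Cauchy_by_sq_norm_bound:
  fixes y :: "nat \<Rightarrow> 'a::real_normed_vector"
  assumes "Cauchy q" "e \<longlonglongrightarrow> 0"
    and bound: "\<And>m n. n \<le> m \<Longrightarrow> (norm (y m - y n))\<^sup>2 \<le> \<bar>q m - q n\<bar> + e n"
  shows "Cauchy y"
proof (rule CauchyI)
  fix \<epsilon> :: real assume "\<epsilon> > 0"
  obtain M1 where M1: "\<And>m n. m \<ge> M1 \<Longrightarrow> n \<ge> M1 \<Longrightarrow> \<bar>q m - q n\<bar> < \<epsilon>\<^sup>2 / 2"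
    using CauchyD[OF assms(1), of "\<epsilon>\<^sup>2 / 2"] \<open>\<epsilon> > 0\<close> by auto
  obtain M2 where M2: "\<And>n. n \<ge> M2 \<Longrightarrow> \<bar>e n\<bar> < \<epsilon>\<^sup>2 / 2"
    using LIMSEQ_D[OF assms(2), of "\<epsilon>\<^sup>2 / 2"] \<open>\<epsilon> > 0\<close> by auto
  have "norm (y m - y n) < \<epsilon>" if "m \<ge> max M1 M2" "n \<ge> max M1 M2" for m n
  proof -
    have "(norm (y m - y n))\<^sup>2 \<le> \<bar>q m - q n\<bar> + e (min m n)"
      using bound[of n m] bound[of m n]
      by (cases "n \<le> m") (auto simp: norm_minus_commute abs_minus_commute min_def)
    moreover have "\<bar>q m - q n\<bar> < \<epsilon>\<^sup>2 / 2" "\<bar>e (min m n)\<bar> < \<epsilon>\<^sup>2 / 2"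
      using M1 M2 that by simp_all
    ultimately have "(norm (y m - y n))\<^sup>2 < \<epsilon>\<^sup>2" by linarith
    then show ?thesis using \<open>\<epsilon> > 0\<close> by (simp add: power_less_imp_less_base)
  qed
  then show "\<exists>M. \<forall>m\<ge>M. \<forall>n\<ge>M. norm (y m - y n) < \<epsilon>" by blast
qed

lemma decseq_convex_min_norm_Cauchy:
  fixes C :: "nat \<Rightarrow> 'a::{real_inner,complete_space} set"
  assumes dec: "decseq C" and convex: "\<And>n. convex (C n)"
    and nonempty: "\<And>n. C n \<noteq> {}" and bounded: "bounded (C 0)"
  obtains y where "\<And>n. y n \<in> C n" "Cauchy y"
proof -
  define q where "q n = Inf ((\<lambda>w. (norm w)\<^sup>2) ` C n)" for n
  have q_le: "q n \<le> (norm w)\<^sup>2" if "w \<in> C n" for n w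
    unfolding q_def using that by (intro cInf_lower bdd_belowI[of _ 0]) auto
  have C_mono: "C m \<subseteq> C n" if "n \<le> m" for m n
    using dec that by (simp add: decseq_def)
  obtain B where B: "\<And>w. w \<in> C 0 \<Longrightarrow> norm w \<le> B"
    using bounded by (meson bounded_iff)
  have "incseq q"
    unfolding incseq_def q_def using C_mono nonempty
    by (auto intro!: cInf_superset_mono bdd_belowI[of _ 0])
  moreover have "q n \<le> B\<^sup>2" for n
  proof -
    obtain w where "w \<in> C n" using nonempty by blast
    with C_mono have "w \<in> C 0" by blast
    with \<open>w \<in> C n\<close> show ?thesis using q_le[of w n] B[of w] by (meson norm_ge_zero order_trans power_mono)
  qed
  ultimately obtain Q where "q \<longlonglongrightarrow> Q"
    using incseq_convergent[of q "B\<^sup>2"] by blast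
  have "\<exists>w\<in>C n. (norm w)\<^sup>2 < q n + inverse (Suc n)" for n
  proof -
    have "Inf ((\<lambda>w. (norm w)\<^sup>2) ` C n) < q n + inverse (Suc n)" unfolding q_def by simp
    then show ?thesis using nonempty[of n] by (subst (asm) cInf_less_iff) (auto intro: bdd_belowI[of _ 0])
  qed
  then obtain y where yC: "\<And>n. y n \<in> C n" and y_small: "\<And>n. (norm (y n))\<^sup>2 < q n + inverse (Suc n)"
    by metis
  have "Cauchy y"
  proof (rule Cauchy_by_sq_norm_bound)
    show "Cauchy (\<lambda>n. 2 * q n)"
      using LIMSEQ_imp_Cauchy[OF tendsto_mult_left[OF \<open>q \<longlonglongrightarrow> Q\<close>]] .
    show "(\<lambda>n. 4 * inverse (real (Suc n))) \<longlonglongrightarrow> 0"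
      using tendsto_mult_right_zero[OF LIMSEQ_inverse_real_of_nat, of 4] by simp
    fix m n :: nat assume "n \<le> m"
    have "(norm (y m - y n))\<^sup>2 \<le> 2 * ((norm (y m))\<^sup>2 - q n) + 2 * ((norm (y n))\<^sup>2 - q n)"
      using C_mono[OF \<open>n \<le> m\<close>] yC q_le by (intro convex_sq_norm_diff_le[OF convex]) auto
    moreover have "inverse (Suc m) \<le> inverse (Suc n)"
      using \<open>n \<le> m\<close> by (simp add: field_simps)
    ultimately show "(norm (y m - y n))\<^sup>2 \<le> \<bar>2 * q m - 2 * q n\<bar> + 4 * inverse (real (Suc n))"
      using y_small[of m] y_small[of n] abs_ge_self[of "2 * q m - 2 * q n"] by argo
  qed
  with yC show ?thesis by (rule that)
qed

lemma decseq_closed_convex_Inter_nonempty: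
  fixes C :: "nat \<Rightarrow> 'a::{real_inner,complete_space} set"
  assumes "decseq C" and closed: "\<And>n. closed (C n)" and "\<And>n. convex (C n)"
    and "\<And>n. C n \<noteq> {}" and "bounded (C 0)"
  shows "(\<Inter>n. C n) \<noteq> {}"
proof -
  obtain y where yC: "\<And>n. y n \<in> C n" and "Cauchy y"
    by (rule decseq_convex_min_norm_Cauchy[OF assms(1,3-5)]) blast
  then obtain x where "y \<longlonglongrightarrow> x" using Cauchy_convergent convergent_def by blast
  have "x \<in> C n" for n
  proof (rule Lim_in_closed_set[OF closed _ _ \<open>y \<longlonglongrightarrow> x\<close>])
    show "eventually (\<lambda>m. y m \<in> C n) sequentially"
      using yC \<open>decseq C\<close> unfolding eventually_sequentially decseq_def by blast
  qed simp
  then show ?thesis by blast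
qed

text \<open>A substitute for weak cluster points: by Mazur's lemma a weak cluster point of a sequence
  lies in every closed convex set that eventually contains the sequence.\<close>

definition convex_cluster_point :: "(nat \<Rightarrow> 'a::real_normed_vector) \<Rightarrow> 'a \<Rightarrow> bool" where
  "convex_cluster_point z w \<longleftrightarrow>
     (\<forall>C. closed C \<longrightarrow> convex C \<longrightarrow> eventually (\<lambda>m. z m \<in> C) sequentially \<longrightarrow> w \<in> C)"

lemma bounded_imp_convex_cluster_point:
  fixes z :: "nat \<Rightarrow> 'a::{real_inner,complete_space}"
  assumes "bounded (range z)"
  obtains w where "convex_cluster_point z w"
proof -
  define C where "C n = closure (convex hull (z ` {n..}))" for n
  have "decseq C"
    unfolding decseq_def C_def by (intro allI impI closure_mono hull_mono) auto
  moreover have "bounded (C 0)"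
    unfolding C_def using assms by (intro bounded_closure bounded_convex_hull) (simp add: image_def)
  moreover have "C n \<noteq> {}" for n
    unfolding C_def by simp
  ultimately obtain w where w: "\<And>n. w \<in> C n"
    using decseq_closed_convex_Inter_nonempty[of C] by (auto simp: C_def convex_closure)
  have "convex_cluster_point z w"
    unfolding convex_cluster_point_def
  proof (intro allI impI)
    fix K :: "'a set" assume "closed K" "convex K" "eventually (\<lambda>m. z m \<in> K) sequentially"
    then obtain n where "z ` {n..} \<subseteq> K" unfolding eventually_sequentially by auto
    then have "C n \<subseteq> K"
      unfolding C_def using \<open>closed K\<close> \<open>convex K\<close> by (intro closure_minimal hull_minimal) auto
    with w show "w \<in> K" by blast
  qed
  then show ?thesis by (rule that)
qed

lemma min_norm_elem_inner_le:
  fixes S :: "'a::real_inner set"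
  assumes "min_norm_elem S z" "convex S" "w \<in> S"
  shows "(norm z)\<^sup>2 \<le> inner z w"
proof -
  have "z \<in> S" and z_min: "\<And>w. w \<in> S \<Longrightarrow> norm z \<le> norm w"
    using assms(1) unfolding min_norm_elem_def by auto
  define a where "a = inner z (w - z)"
  define b where "b = (norm (w - z))\<^sup>2"
  have ab: "0 \<le> 2 * a + l * b" if "0 < l" "l \<le> 1" for l
  proof -
    have "(1 - l) *\<^sub>R z + l *\<^sub>R w \<in> S"
      using assms(2) \<open>z \<in> S\<close> assms(3) that unfolding convex_def by simp
    moreover have "(1 - l) *\<^sub>R z + l *\<^sub>R w = z + l *\<^sub>R (w - z)" by (simp add: algebra_simps)
    ultimately have "(norm z)\<^sup>2 \<le> (norm (z + l *\<^sub>R (w - z)))\<^sup>2"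
      using z_min by (metis norm_ge_zero power_mono)
    also have "\<dots> = (norm z)\<^sup>2 + l * (2 * a + l * b)"
      unfolding a_def b_def power2_norm_eq_inner
      by (simp add: inner_add_left inner_add_right inner_commute algebra_simps power2_eq_square)
    finally show ?thesis using that by (simp add: zero_le_mult_iff)
  qed
  have "0 \<le> a"
  proof (rule ccontr)
    assume "\<not> 0 \<le> a"
    define l where "l = min 1 (- a / (b + 1))"
    have "0 \<le> b" unfolding b_def by simp
    with \<open>\<not> 0 \<le> a\<close> have "0 < l" "l \<le> 1" by (auto simp: l_def divide_neg_pos)
    have "l * b \<le> (- a / (b + 1)) * b" using \<open>0 \<le> b\<close> unfolding l_def by (intro mult_right_mono) auto
    also have "\<dots> = - a * (b / (b + 1))" by simp
    also have "\<dots> \<le> - a * 1"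
      using \<open>\<not> 0 \<le> a\<close> \<open>0 \<le> b\<close> by (intro mult_left_mono) auto
    also have "\<dots> < - 2 * a" using \<open>\<not> 0 \<le> a\<close> by simp
    finally show False using ab[OF \<open>0 < l\<close> \<open>l \<le> 1\<close>] by simp
  qed
  then show ?thesis unfolding a_def by (simp add: inner_diff_right power2_norm_eq_inner)
qed

section \<open>Subdifferentials of homogeneous functionals\<close>

lemma lsc_ereal_eventually_gt:
  assumes "lsc_ereal J" "ereal c < J x"
  shows "eventually (\<lambda>v. ereal c < J v) (nhds x)"
proof -
  have "open (- {v. J v \<le> ereal c})"
    using assms(1) unfolding lsc_ereal_def by auto
  with assms(2) show ?thesis
    unfolding eventually_nhds by (intro exI[of _ "- {v. J v \<le> ereal c}"]) auto
qed

lemma subdiff_imp_finite: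
  assumes "proper_ereal J" "z \<in> subdiff J x"
  obtains e where "J x = ereal e"
proof -
  obtain v where "J v \<noteq> \<infinity>" using assms(1) unfolding proper_ereal_def by auto
  moreover have "J x + ereal (inner z (v - x)) \<le> J v" using assms(2) unfolding subdiff_def by auto
  moreover have "J x \<noteq> -\<infinity>" using assms(1) unfolding proper_ereal_def by auto
  ultimately show ?thesis using that by (cases "J x") auto
qed

lemma convex_subdiff:
  assumes "J x = ereal e"
  shows "convex (subdiff J x)"
  unfolding convex_def
proof (intro ballI allI impI)
  fix z1 z2 and a b :: real
  assume z: "z1 \<in> subdiff J x" "z2 \<in> subdiff J x" and ab: "0 \<le> a" "0 \<le> b" "a + b = 1"
  show "a *\<^sub>R z1 + b *\<^sub>R z2 \<in> subdiff J x"
    unfolding subdiff_def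
  proof (intro CollectI allI)
    fix v
    have z1v: "ereal (e + inner z1 (v - x)) \<le> J v" and z2v: "ereal (e + inner z2 (v - x)) \<le> J v"
      using z assms unfolding subdiff_def by auto
    show "J x + ereal (inner (a *\<^sub>R z1 + b *\<^sub>R z2) (v - x)) \<le> J v"
    proof (cases "J v")
      case (real r)
      with z1v z2v have "a * (e + inner z1 (v - x)) + b * (e + inner z2 (v - x)) \<le> a * r + b * r"
        using ab by (intro add_mono mult_left_mono) auto
      moreover have "inner (a *\<^sub>R z1 + b *\<^sub>R z2) (v - x) = a * inner z1 (v - x) + b * inner z2 (v - x)"
        by (simp add: inner_add_left)
      moreover have "a * e + b * e = e" "a * r + b * r = r"
        using ab(3) by (metis distrib_right mult_1)+
      ultimately show ?thesis using real assms by (simp add: distrib_left)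
    qed (use z1v in auto)
  qed
qed

lemma subdiff_limit_eventually_le:
  assumes lsc: "lsc_ereal J" and proper: "proper_ereal J" and "J x = ereal e" "J v = ereal r"
    and lim: "xs \<longlonglongrightarrow> x" and sub: "\<And>m. z m \<in> subdiff J (xs m)"
    and bound: "\<And>m. norm (z m) \<le> L" and "\<epsilon> > 0"
  shows "eventually (\<lambda>m. inner (v - x) (z m) \<le> r - e + \<epsilon>) sequentially"
proof -
  have "ereal (e - \<epsilon>/2) < J x" using \<open>J x = ereal e\<close> \<open>\<epsilon> > 0\<close> by simp
  from eventually_compose_filterlim[OF lsc_ereal_eventually_gt[OF lsc this] lim]
  have "eventually (\<lambda>m. ereal (e - \<epsilon>/2) < J (xs m)) sequentially" .
  moreover have "((\<lambda>m. (L + 1) * norm (xs m - x)) \<longlongrightarrow> (L + 1) * 0) sequentially"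
    using lim by (intro tendsto_mult tendsto_const tendsto_norm_zero LIM_zero)
  then have "eventually (\<lambda>m. (L + 1) * norm (xs m - x) < \<epsilon>/2) sequentially"
    using \<open>\<epsilon> > 0\<close> by (intro order_tendstoD(2)) auto
  ultimately show ?thesis
  proof eventually_elim
    case (elim m)
    obtain em where em: "J (xs m) = ereal em" using subdiff_imp_finite[OF proper sub] .
    have "J (xs m) + ereal (inner (z m) (v - xs m)) \<le> J v"
      using sub[of m] unfolding subdiff_def by blast
    with em \<open>J v = ereal r\<close> have "em + inner (z m) (v - xs m) \<le> r" by simp
    moreover have "\<bar>inner (z m) (x - xs m)\<bar> \<le> norm (z m) * norm (xs m - x)"
      using Cauchy_Schwarz_ineq2[of "z m" "x - xs m"] by (simp add: norm_minus_commute)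
    moreover have "norm (z m) * norm (xs m - x) \<le> (L + 1) * norm (xs m - x)"
      using bound[of m] by (simp add: mult_right_mono)
    moreover have "inner (z m) (v - xs m) = inner (z m) (v - x) + inner (z m) (x - xs m)"
      by (simp add: inner_diff_right)
    ultimately show ?case using elim em by (simp add: inner_commute abs_le_iff)
  qed
qed

lemma subdiff_convex_cluster_point:
  assumes lsc: "lsc_ereal J" and proper: "proper_ereal J" and "J x = ereal e"
    and lim: "xs \<longlonglongrightarrow> x" and sub: "\<And>m. z m \<in> subdiff J (xs m)"
    and bound: "\<And>m. norm (z m) \<le> L" and cluster: "convex_cluster_point z w"
  shows "w \<in> subdiff J x"
  unfolding subdiff_def
proof (intro CollectI allI)
  fix v
  show "J x + ereal (inner w (v - x)) \<le> J v"
  proof (cases "J v")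
    case (real r)
    have "e + inner (v - x) w \<le> r"
    proof (rule field_le_epsilon)
      fix \<epsilon> :: real assume "\<epsilon> > 0"
      from subdiff_limit_eventually_le[OF lsc proper \<open>J x = ereal e\<close> real lim sub bound this]
      have "eventually (\<lambda>m. z m \<in> {y. inner (v - x) y \<le> r - e + \<epsilon>}) sequentially"
        by simp
      then have "w \<in> {y. inner (v - x) y \<le> r - e + \<epsilon>}"
        using cluster closed_halfspace_le convex_halfspace_le
        unfolding convex_cluster_point_def by blast
      then show "e + inner (v - x) w \<le> r + \<epsilon>" by simp
    qed
    with real \<open>J x = ereal e\<close> show ?thesis by (simp add: inner_commute)
  qed (use proper in \<open>auto simp: proper_ereal_def\<close>)
qed

lemma abs_p_homogeneous_pos:
  assumes "abs_p_homogeneous p J" "c > 0"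
  shows "J (c *\<^sub>R u) = ereal (c powr p) * J u"
  using assms unfolding abs_p_homogeneous_def by auto

lemma abs_p_homogeneous_nonneg:
  assumes "convex_ereal J" "abs_p_homogeneous p J"
  shows "0 \<le> J u"
proof -
  have "J ((1 - t) *\<^sub>R x + t *\<^sub>R y) \<le> ereal (1 - t) * J x + ereal t * J y"
    if "0 \<le> t" "t \<le> 1" for x y t
    using assms(1) that unfolding convex_ereal_def by blast
  from this[of "1/2" u "- u"] have "J 0 \<le> ereal (1/2) * J u + ereal (1/2) * J (- u)"
    by simp
  moreover have "J (- u) = J u" and "J 0 = 0"
    using assms(2) unfolding abs_p_homogeneous_def
    by (metis abs_minus_cancel abs_one mult_1 one_ereal_def powr_one_eq_one scaleR_minus1_left zero_neq_neg_one)+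
  ultimately have "0 \<le> ereal (1/2) * J u + ereal (1/2) * J u" by simp
  then show ?thesis by (cases "J u") auto
qed

lemma subdiff_euler_identity:
  assumes "abs_p_homogeneous p J" "J x = ereal e" "z \<in> subdiff J x"
  shows "inner z x = p * e"
proof -
  define h where "h c = c powr p * e - e - (c - 1) * inner z x" for c :: real
  have h_nonneg: "0 \<le> h c" if "c > 0" for c
  proof -
    have "J x + ereal (inner z (c *\<^sub>R x - x)) \<le> J (c *\<^sub>R x)"
      using assms(3) unfolding subdiff_def by blast
    also have "J (c *\<^sub>R x) = ereal (c powr p * e)"
      using abs_p_homogeneous_pos[OF assms(1) that] assms(2) by simp
    finally show ?thesis using assms(2) by (simp add: h_def inner_diff_right algebra_simps)
  qed
  have "(h has_real_derivative (p * 1 powr (p - 1) * e - inner z x)) (at 1)"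
    unfolding h_def by (rule derivative_eq_intros has_real_derivative_powr | simp)+
  moreover have "\<forall>c. \<bar>1 - c\<bar> < 1 \<longrightarrow> h 1 \<le> h c"
    using h_nonneg by (simp add: h_def abs_less_iff)
  ultimately have "p * 1 powr (p - 1) * e - inner z x = 0"
    by (intro DERIV_local_min[of h _ 1 1]) auto
  then show ?thesis by simp
qed

section \<open>Gradient flows of homogeneous functionals\<close>

lemma extinction_time_neq_infinityE:
  assumes "extinction_time u \<noteq> \<infinity>"
  obtains T where "T > 0" "\<And>t. t \<ge> T \<Longrightarrow> u t = 0"
proof -
  have "{ereal T | T. T > 0 \<and> (\<forall>t\<ge>T. u t = 0)} \<noteq> {}"
  proof
    assume empty: "{ereal T | T. T > 0 \<and> (\<forall>t\<ge>T. u t = 0)} = {}"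
    have "extinction_time u = Inf {}" unfolding extinction_time_def empty ..
    with assms show False by (simp add: top_ereal_def)
  qed
  with that show ?thesis by blast
qed

lemma first_zero_exists:
  fixes u :: "real \<Rightarrow> 'a::real_normed_vector"
  assumes "continuous_on {0..} u" "u 0 \<noteq> 0" "T0 \<ge> 0" "u T0 = 0"
  obtains T where "T > 0" "u T = 0" "\<And>s. s \<in> {0..<T} \<Longrightarrow> u s \<noteq> 0"
proof -
  define Z where "Z = {t \<in> {0..T0}. u t = 0}"
  have "continuous_on {0..T0} u" using assms(1) by (rule continuous_on_subset) auto
  then have "closed Z"
    unfolding Z_def by (rule continuous_closed_preimage_constant) simp
  moreover have "T0 \<in> Z" using assms(3,4) by (simp add: Z_def)
  moreover have "bdd_below Z" unfolding Z_def by (rule bdd_belowI[of _ 0]) simp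
  ultimately have "Inf Z \<in> Z" by (intro closed_contains_Inf) auto
  moreover have "u s \<noteq> 0" if "s \<in> {0..<Inf Z}" for s
  proof
    assume "u s = 0"
    with that \<open>Inf Z \<in> Z\<close> have "s \<in> Z" by (auto simp: Z_def)
    then have "Inf Z \<le> s" using \<open>bdd_below Z\<close> by (rule cInf_lower)
    with that show False by simp
  qed
  moreover have "u (Inf Z) = 0" "0 \<le> Inf Z" using \<open>Inf Z \<in> Z\<close> by (simp_all add: Z_def)
  moreover from this assms(2) have "Inf Z \<noteq> 0" by auto
  ultimately show ?thesis using that[of "Inf Z"] by simp
qed

locale homogeneous_gradient_flow =
  fixes J :: "'a::{real_inner,complete_space} \<Rightarrow> ereal" and p :: real
    and f :: 'a and u :: "real \<Rightarrow> 'a"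
  assumes p_ge_2: "p \<ge> 2" and convex: "convex_ereal J" and lsc: "lsc_ereal J"
    and proper: "proper_ereal J" and homogeneous: "abs_p_homogeneous p J"
    and flow: "is_gradient_flow J f u"
begin

definition zeta :: "real \<Rightarrow> 'a" where
  "zeta t = (SOME z. min_norm_elem (subdiff J (u t)) z \<and> (u has_vector_derivative - z) (at t within {t..}))"

lemma zeta_spec:
  assumes "t > 0"
  shows "min_norm_elem (subdiff J (u t)) (zeta t) \<and> (u has_vector_derivative - zeta t) (at t within {t..})"
proof -
  have "\<exists>z. min_norm_elem (subdiff J (u t)) z \<and> (u has_vector_derivative - z) (at t within {t..})"
    using flow assms unfolding is_gradient_flow_def by blast
  from someI_ex[OF this] show ?thesis unfolding zeta_def .
qed

lemma zeta_min_norm: "t > 0 \<Longrightarrow> min_norm_elem (subdiff J (u t)) (zeta t)"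
  using zeta_spec by blast

lemma zeta_derivative: "t > 0 \<Longrightarrow> (u has_vector_derivative - zeta t) (at t within {t..})"
  using zeta_spec by blast

lemma zeta_subdiff: "t > 0 \<Longrightarrow> zeta t \<in> subdiff J (u t)"
  using zeta_min_norm unfolding min_norm_elem_def by blast

lemma flow_lipschitz:
  assumes "\<delta> > 0"
  obtains L where "L-lipschitz_on {\<delta>..} u"
  using flow assms unfolding is_gradient_flow_def by blast

lemma isCont_flow:
  assumes "t > 0"
  shows "isCont u t"
proof -
  obtain L where "L-lipschitz_on {t/2..} u" using flow_lipschitz[of "t/2"] assms by auto
  then have "continuous_on {t/2..} u" by (rule lipschitz_on_continuous_on)
  moreover have "t \<in> interior {t/2..}" using assms by simp
  ultimately show ?thesis by (rule continuous_on_interior)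
qed

lemma norm_zeta_le:
  assumes "L-lipschitz_on {\<delta>..} u" "0 < \<delta>" "\<delta> \<le> t"
  shows "norm (zeta t) \<le> L"
proof -
  have "L-lipschitz_on {t..} u" using assms by (auto intro: lipschitz_on_subset)
  with zeta_derivative[of t] assms show ?thesis
    using norm_right_derivative_le_lipschitz by fastforce
qed

definition energy :: "real \<Rightarrow> real" where
  "energy t = real_of_ereal (J (u t))"

lemma J_flow_eq_energy: "t > 0 \<Longrightarrow> J (u t) = ereal (energy t)"
  using subdiff_imp_finite[OF proper zeta_subdiff] unfolding energy_def by force

lemma energy_nonneg: "0 \<le> energy t"
  using abs_p_homogeneous_nonneg[OF convex homogeneous, of "u t"]
  unfolding energy_def by (simp add: real_of_ereal_pos)

lemma inner_zeta_flow_eq: "t > 0 \<Longrightarrow> inner (zeta t) (u t) = p * energy t"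
  using subdiff_euler_identity[OF homogeneous J_flow_eq_energy zeta_subdiff] .

lemma inner_zeta_right_lower_bound:
  assumes "t > 0" "\<eta> > 0"
  shows "eventually (\<lambda>s. (norm (zeta t))\<^sup>2 - \<eta> \<le> inner (zeta s) (zeta t)) (at_right t)"
proof (rule ccontr)
  define Z where "Z = (norm (zeta t))\<^sup>2"
  assume "\<not> ?thesis"
  then obtain s where s_gt: "\<And>m. t < s m" and "s \<longlonglongrightarrow> t"
    and s_not: "\<And>m. \<not> (norm (zeta t))\<^sup>2 - \<eta> \<le> inner (zeta (s m)) (zeta t)"
    by (rule not_eventually_at_rightE) blast
  have s_inner: "inner (zeta (s m)) (zeta t) < Z - \<eta>" for m
    using s_not[of m] by (simp add: Z_def not_le)
  have "(\<lambda>m. u (s m)) \<longlonglongrightarrow> u t"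
    using isCont_flow[OF assms(1)] \<open>s \<longlonglongrightarrow> t\<close> by (rule isCont_tendsto_compose)
  obtain L where L: "L-lipschitz_on {t..} u" using flow_lipschitz assms(1) by blast
  have bound: "norm (zeta (s m)) \<le> L" for m
    using norm_zeta_le[OF L assms(1)] s_gt[of m] by simp
  then have "bounded (range (\<lambda>m. zeta (s m)))" by (auto simp: bounded_iff)
  then obtain w where w: "convex_cluster_point (\<lambda>m. zeta (s m)) w"
    by (rule bounded_imp_convex_cluster_point)
  have "w \<in> subdiff J (u t)"
  proof (rule subdiff_convex_cluster_point[OF lsc proper J_flow_eq_energy \<open>(\<lambda>m. u (s m)) \<longlonglongrightarrow> u t\<close>])
    show "zeta (s m) \<in> subdiff J (u (s m))" for m
      using assms(1) s_gt[of m] by (intro zeta_subdiff) simp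
  qed (use assms(1) bound w in auto)
  moreover have "convex (subdiff J (u t))"
    using J_flow_eq_energy[OF assms(1)] by (rule convex_subdiff)
  ultimately have "Z \<le> inner (zeta t) w"
    unfolding Z_def using zeta_min_norm[OF assms(1)] by (intro min_norm_elem_inner_le)
  moreover have "eventually (\<lambda>m. zeta (s m) \<in> {y. inner (zeta t) y \<le> Z - \<eta>}) sequentially"
    using s_inner by (simp add: inner_commute less_imp_le)
  then have "w \<in> {y. inner (zeta t) y \<le> Z - \<eta>}"
    using w closed_halfspace_le convex_halfspace_le unfolding convex_cluster_point_def by blast
  ultimately show False using assms(2) by simp
qed

lemma energy_le_inner_zeta:
  assumes "s > 0" "t > 0"
  shows "energy s \<le> energy t + inner (zeta s) (u s - u t)"
proof -
  have "J (u s) + ereal (inner (zeta s) (u t - u s)) \<le> J (u t)"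
    using zeta_subdiff[OF assms(1)] unfolding subdiff_def by blast
  then show ?thesis
    using J_flow_eq_energy[OF assms(1)] J_flow_eq_energy[OF assms(2)] by (simp add: inner_diff_right)
qed

lemma inner_zeta_increment_right_bound:
  assumes "t > 0" "\<eta> > 0"
  shows "eventually (\<lambda>s. inner (zeta s) (u s - u t) \<le> (- (norm (zeta t))\<^sup>2 + \<eta>) * (s - t)) (at_right t)"
proof -
  define Z where "Z = (norm (zeta t))\<^sup>2"
  obtain L where L: "L-lipschitz_on {t..} u" using flow_lipschitz assms by blast
  then have "L \<ge> 0" by (rule lipschitz_on_nonneg)
  define \<eta>' where "\<eta>' = \<eta> / (2 * (L + 1))"
  have "\<eta>' > 0" "L * \<eta>' \<le> \<eta> / 2"
    using \<open>\<eta> > 0\<close> \<open>L \<ge> 0\<close> by (simp_all add: \<eta>'_def field_simps)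
  have "eventually (\<lambda>s. Z - \<eta> / 2 \<le> inner (zeta s) (zeta t)) (at_right t)"
    unfolding Z_def using inner_zeta_right_lower_bound[OF assms(1), of "\<eta> / 2"] \<open>\<eta> > 0\<close> by simp
  moreover have "eventually (\<lambda>s. norm (u s - u t - (s - t) *\<^sub>R - zeta t) \<le> \<eta>' * (s - t)) (at_right t)"
    using has_vector_derivative_right_approx[OF zeta_derivative[OF assms(1)] \<open>\<eta>' > 0\<close>] .
  ultimately show ?thesis
    unfolding Z_def[symmetric] using eventually_at_right_less[of t]
  proof eventually_elim
    case (elim s)
    have "norm (zeta s) \<le> L" using norm_zeta_le[OF L assms(1)] elim(3) by simp
    have "inner (zeta s) (u s - u t)
        = inner (zeta s) (u s - u t - (s - t) *\<^sub>R - zeta t) - (s - t) * inner (zeta s) (zeta t)"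
      by (simp add: inner_diff_right algebra_simps)
    also have "\<dots> \<le> L * (\<eta>' * (s - t)) - (s - t) * (Z - \<eta> / 2)"
    proof (rule diff_mono)
      show "inner (zeta s) (u s - u t - (s - t) *\<^sub>R - zeta t) \<le> L * (\<eta>' * (s - t))"
        using norm_cauchy_schwarz[of "zeta s"] \<open>norm (zeta s) \<le> L\<close> elim(2) \<open>L \<ge> 0\<close>
        by (meson mult_mono norm_ge_zero order_trans)
      show "(s - t) * (Z - \<eta> / 2) \<le> (s - t) * inner (zeta s) (zeta t)"
        using elim(1,3) by (simp add: mult_left_mono)
    qed
    also have "L * (\<eta>' * (s - t)) \<le> \<eta> / 2 * (s - t)"
      using mult_right_mono[OF \<open>L * \<eta>' \<le> \<eta> / 2\<close>, of "s - t"] elim(3) by (simp add: mult.assoc)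
    finally show ?case by (simp add: field_simps)
  qed
qed

lemma energy_upper_right_dini:
  assumes "t > 0"
  shows "upper_right_dini_le energy t (- (norm (zeta t))\<^sup>2)"
  unfolding upper_right_dini_le_def
proof (intro allI impI)
  fix \<eta> :: real assume "\<eta> > 0"
  show "eventually (\<lambda>s. energy s \<le> energy t + (- (norm (zeta t))\<^sup>2 + \<eta>) * (s - t)) (at_right t)"
    using inner_zeta_increment_right_bound[OF assms \<open>\<eta> > 0\<close>] eventually_at_right_less[of t]
  proof eventually_elim
    case (elim s)
    with assms have "energy s \<le> energy t + inner (zeta s) (u s - u t)"
      by (intro energy_le_inner_zeta) auto
    with elim(1) show ?case by linarith
  qed
qed

lemma energy_lsc:
  assumes "t > 0" "\<epsilon> > 0"
  shows "eventually (\<lambda>s. energy t - \<epsilon> < energy s) (at t)"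
proof -
  have "ereal (energy t - \<epsilon>) < J (u t)" using J_flow_eq_energy[OF assms(1)] assms(2) by simp
  from lsc_ereal_eventually_gt[OF lsc this]
  have "eventually (\<lambda>s. ereal (energy t - \<epsilon>) < J (u s)) (at t)"
    using isCont_flow[OF assms(1)] unfolding isCont_def by (rule eventually_compose_filterlim)
  moreover have "eventually (\<lambda>s. s > 0) (at t)"
    using order_tendstoD(1)[OF tendsto_ident_at assms(1)] .
  ultimately show ?thesis
    by eventually_elim (simp add: J_flow_eq_energy)
qed

definition sqnorm :: "real \<Rightarrow> real" where
  "sqnorm t = (norm (u t))\<^sup>2"

lemma sqnorm_pos: "u t \<noteq> 0 \<Longrightarrow> sqnorm t > 0"
  by (simp add: sqnorm_def)

lemma isCont_sqnorm: "t > 0 \<Longrightarrow> isCont sqnorm t"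
  unfolding sqnorm_def using isCont_flow by (intro continuous_intros)

lemma sqnorm_derivative:
  assumes "t > 0"
  shows "(sqnorm has_real_derivative - 2 * p * energy t) (at t within {t..})"
proof -
  have u': "(u has_derivative (\<lambda>h. h *\<^sub>R - zeta t)) (at t within {t..})"
    using zeta_derivative[OF assms] by (simp add: has_vector_derivative_def)
  have "(\<lambda>h. inner (u t) (h *\<^sub>R - zeta t) + inner (h *\<^sub>R - zeta t) (u t)) = (*) (- 2 * p * energy t)"
  proof
    fix h
    have "inner (zeta t) (u t) = p * energy t" "inner (u t) (zeta t) = p * energy t"
      using inner_zeta_flow_eq[OF assms] by (simp_all add: inner_commute)
    then show "inner (u t) (h *\<^sub>R - zeta t) + inner (h *\<^sub>R - zeta t) (u t) = - 2 * p * energy t * h"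
      by (simp add: algebra_simps)
  qed
  with has_derivative_inner[OF u' u']
  have "((\<lambda>s. inner (u s) (u s)) has_derivative (*) (- 2 * p * energy t)) (at t within {t..})"
    by simp
  then show ?thesis
    unfolding has_field_derivative_def sqnorm_def power2_norm_eq_inner .
qed

lemma sqnorm_nonincreasing:
  assumes "0 < a" "a \<le> b"
  shows "sqnorm b \<le> sqnorm a"
proof (rule nonincreasing_by_upper_right_dini[OF assms(2)])
  fix t \<epsilon> :: real assume "t \<in> {a<..b}" "\<epsilon> > 0"
  with assms show "eventually (\<lambda>s. sqnorm t - \<epsilon> < sqnorm s) (at_left t)"
    by (intro isCont_left_lsc isCont_sqnorm) auto
next
  fix t assume "t \<in> {a..<b}"
  with assms have "t > 0" by simp
  have "- 2 * p * energy t \<le> 0" using energy_nonneg[of t] p_ge_2 by simp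
  with upper_right_dini_le_derivative[OF sqnorm_derivative[OF \<open>t > 0\<close>]]
  show "upper_right_dini_le sqnorm t 0" by (rule upper_right_dini_le_mono)
qed

definition rayleigh :: "real \<Rightarrow> real" where
  "rayleigh t = energy t / sqnorm t powr (p / 2)"

lemma rayleigh_upper_right_dini:
  assumes "t > 0" "u t \<noteq> 0"
  shows "upper_right_dini_le rayleigh t 0"
proof -
  define y where "y = sqnorm t"
  have "y > 0" unfolding y_def using sqnorm_pos[OF assms(2)] .
  have y_powr: "y powr (p / 2) = y * y powr (p / 2 - 1)"
    using \<open>y > 0\<close> powr_add[of y 1 "p / 2 - 1"] by simp
  have "((\<lambda>s. sqnorm s powr (p / 2)) has_real_derivative
      p / 2 * y powr (p / 2 - 1) * (- 2 * p * energy t)) (at t within {t..})"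
    unfolding y_def
    by (rule DERIV_chain2[OF has_real_derivative_powr[OF sqnorm_pos[OF assms(2)], of "p / 2"]
          sqnorm_derivative[OF assms(1)]])
  moreover have "- (norm (zeta t))\<^sup>2 * y powr (p / 2) \<le> energy t * (p / 2 * y powr (p / 2 - 1) * (- 2 * p * energy t))"
  proof -
    have "(p * energy t)\<^sup>2 = (inner (zeta t) (u t))\<^sup>2" using inner_zeta_flow_eq[OF assms(1)] by simp
    also have "\<dots> \<le> (norm (zeta t))\<^sup>2 * y"
      using Cauchy_Schwarz_ineq[of "zeta t" "u t"] by (simp add: y_def sqnorm_def power2_norm_eq_inner)
    finally have "(p * energy t)\<^sup>2 * y powr (p / 2 - 1) \<le> (norm (zeta t))\<^sup>2 * y * y powr (p / 2 - 1)"
      by (rule mult_right_mono) simp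
    then show ?thesis by (simp add: y_powr power2_eq_square algebra_simps)
  qed
  ultimately show ?thesis
    using \<open>y > 0\<close> energy_nonneg[of t] unfolding rayleigh_def y_def
    by (intro upper_right_dini_quotient_nonpos[OF energy_upper_right_dini[OF assms(1)]]) auto
qed

lemma rayleigh_left_lsc:
  assumes "t > 0" "u t \<noteq> 0" "\<epsilon> > 0"
  shows "eventually (\<lambda>s. rayleigh t - \<epsilon> < rayleigh s) (at_left t)"
proof -
  have "((\<lambda>s. sqnorm s powr (p / 2)) \<longlongrightarrow> sqnorm t powr (p / 2)) (at t)"
    using isCont_sqnorm[OF assms(1)] sqnorm_pos[OF assms(2)]
    by (intro tendsto_intros) (auto simp: isCont_def)
  then have "eventually (\<lambda>s. rayleigh t - \<epsilon> < rayleigh s) (at t)"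
    unfolding rayleigh_def using energy_lsc[OF assms(1)] sqnorm_pos[OF assms(2)] assms(3)
    by (intro eventually_quotient_gt) auto
  then show ?thesis by (rule filter_leD[OF at_le, rotated]) simp
qed

lemma rayleigh_nonincreasing:
  assumes "0 < a" "a \<le> b" "\<And>s. s \<in> {a..b} \<Longrightarrow> u s \<noteq> 0"
  shows "rayleigh b \<le> rayleigh a"
proof (rule nonincreasing_by_upper_right_dini[OF assms(2)])
  fix t \<epsilon> :: real assume "t \<in> {a<..b}" "\<epsilon> > 0"
  with assms show "eventually (\<lambda>s. rayleigh t - \<epsilon> < rayleigh s) (at_left t)"
    by (intro rayleigh_left_lsc) auto
next
  fix t assume "t \<in> {a..<b}"
  with assms show "upper_right_dini_le rayleigh t 0"
    by (intro rayleigh_upper_right_dini) auto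
qed

lemma energy_le_sqnorm:
  assumes "0 < a" "a \<le> t" "\<And>s. s \<in> {a..t} \<Longrightarrow> u s \<noteq> 0"
  shows "energy t \<le> rayleigh a * sqnorm a powr (p / 2 - 1) * sqnorm t"
proof -
  have "sqnorm t > 0" using sqnorm_pos assms by simp
  have "rayleigh a \<ge> 0" unfolding rayleigh_def using energy_nonneg by simp
  have "energy t = rayleigh t * (sqnorm t powr (p / 2 - 1) * sqnorm t)"
    using \<open>sqnorm t > 0\<close> powr_add[of "sqnorm t" "p / 2 - 1" 1] by (simp add: rayleigh_def)
  also have "\<dots> \<le> rayleigh a * (sqnorm a powr (p / 2 - 1) * sqnorm t)"
  proof (intro mult_mono mult_right_mono powr_mono2)
    show "rayleigh t \<le> rayleigh a" using assms by (rule rayleigh_nonincreasing)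
    show "sqnorm t \<le> sqnorm a" using assms by (intro sqnorm_nonincreasing)
  qed (use p_ge_2 \<open>sqnorm t > 0\<close> \<open>rayleigh a \<ge> 0\<close> in auto)
  finally show ?thesis by (simp add: mult.assoc)
qed

lemma flow_nonvanishing:
  assumes "0 < a" "a < b" "\<And>s. s \<in> {a..<b} \<Longrightarrow> u s \<noteq> 0"
  shows "u b \<noteq> 0"
proof -
  define K where "K = 2 * p * rayleigh a * sqnorm a powr (p / 2 - 1)"
  \<comment> \<open>Gronwall: \<open>2p energy \<le> K sqnorm\<close> makes \<open>sqnorm t * exp (K t)\<close> nondecreasing.\<close>
  define \<psi> where "\<psi> s = - (sqnorm s * exp (K * s))" for s
  have "\<psi> b \<le> \<psi> a"
  proof (rule nonincreasing_by_upper_right_dini[of a b \<psi>])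
    fix t \<epsilon> :: real assume "t \<in> {a<..b}" "\<epsilon> > 0"
    with assms have "isCont \<psi> t"
      unfolding \<psi>_def by (intro continuous_intros isCont_sqnorm) auto
    then show "eventually (\<lambda>s. \<psi> t - \<epsilon> < \<psi> s) (at_left t)"
      using \<open>\<epsilon> > 0\<close> by (rule isCont_left_lsc)
  next
    fix t assume t: "t \<in> {a..<b}"
    with assms have "t > 0" by simp
    have "((\<lambda>s. exp (K * s)) has_real_derivative exp (K * t) * K) (at t within {t..})"
      by (auto intro!: derivative_eq_intros)
    from DERIV_minus[OF DERIV_mult[OF sqnorm_derivative[OF \<open>t > 0\<close>] this]]
    have "(\<psi> has_real_derivative - (- 2 * p * energy t * exp (K * t) + exp (K * t) * K * sqnorm t))
        (at t within {t..})"
      unfolding \<psi>_def .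
    moreover have "2 * p * energy t \<le> K * sqnorm t"
      using energy_le_sqnorm[of a t] assms t p_ge_2 unfolding K_def
      by (auto intro!: mult_left_mono simp: mult.assoc)
    then have "2 * p * energy t * exp (K * t) \<le> K * sqnorm t * exp (K * t)"
      by (rule mult_right_mono) simp
    then have "- (- 2 * p * energy t * exp (K * t) + exp (K * t) * K * sqnorm t) \<le> 0"
      by (simp add: algebra_simps)
    ultimately show "upper_right_dini_le \<psi> t 0"
      by (intro upper_right_dini_le_mono[OF upper_right_dini_le_derivative])
  qed (use assms in simp)
  then have "sqnorm a * exp (K * a) \<le> sqnorm b * exp (K * b)"
    unfolding \<psi>_def by simp
  moreover have "sqnorm a > 0" using assms by (intro sqnorm_pos) auto
  ultimately have "sqnorm b > 0"
    by (smt (verit) exp_gt_zero mult_pos_pos mult_nonpos_nonneg not_le)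
  then show ?thesis by (simp add: sqnorm_def)
qed

end

theorem theorem1:
  fixes J :: "'a::{real_inner, complete_space} \<Rightarrow> ereal"
    and p :: real and f :: 'a and u :: "real \<Rightarrow> 'a"
  assumes "p \<ge> 2"
    and "convex_ereal J" and "lsc_ereal J" and "proper_ereal J"
    and "closure (eff_dom J) = UNIV"
    and "abs_p_homogeneous p J"
    and "lambda1 p J > 0"
    and "f \<in> H0 J"
    and "is_gradient_flow J f u"
  shows "extinction_time u = \<infinity>"
proof (rule ccontr)
  interpret homogeneous_gradient_flow J p f u
    using assms by unfold_locales
  have "continuous_on {0..} u" "u 0 \<noteq> 0"
    using assms(8,9) unfolding is_gradient_flow_def H0_def by auto
  assume "extinction_time u \<noteq> \<infinity>"
  then obtain T0 where "T0 > 0" "\<And>t. t \<ge> T0 \<Longrightarrow> u t = 0"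
    by (rule extinction_time_neq_infinityE) blast
  then have "0 \<le> T0" "u T0 = 0" by simp_all
  then obtain T where "T > 0" "u T = 0" and nonzero: "\<And>s. s \<in> {0..<T} \<Longrightarrow> u s \<noteq> 0"
    by (rule first_zero_exists[OF \<open>continuous_on {0..} u\<close> \<open>u 0 \<noteq> 0\<close>]) blast
  have "u T \<noteq> 0"
  proof (rule flow_nonvanishing)
    show "0 < T / 2" "T / 2 < T" using \<open>T > 0\<close> by simp_all
    show "u s \<noteq> 0" if "s \<in> {T / 2..<T}" for s
      using nonzero that \<open>T > 0\<close> by simp
  qed
  with \<open>u T = 0\<close> show False by simp
qed

end
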